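(* In the two-bus model of the context, fix a total demand $d>0$ and generation capacities $\overline{\mathbf q}=(\overline q_1,\overline q_2)$ with $\overline q_1\ge d$. Let $\mathcal D$ be the set of demand profiles $\mathbf d=(d_1,d_2)$ with $d_1,d_2\ge 0$, $d_1+d_2=d$, such that $(\overline{\mathbf q},\mathbf d)$ is feasible for both \textsf{ED-2b} and \textsf{SCED-2b}. Let $\mathbf d^*=(d-\min\{d,f^{\mathsf{ed}}\},\ \min\{d,f^{\mathsf{ed}}\})$ and assume $\mathbf d^*\in\mathcal D$. Then for every $\mathbf d\in\mathcal D$, $\mathsf{PoS}(\overline{\mathbf q},\mathbf d)\le\mathsf{PoS}(\overline{\mathbf q},\mathbf d^* )$, and, writing $\mathbf d^*=(d_1^*,d_2^* )$, $$\mathsf{PoS}(\overline{\mathbf q},\mathbf d^* )=\frac{\alpha_1\big(d_1^*+\min\{f^{\mathsf{sc}},d_2^*\}\big)+\alpha_2\,[d_2^*-f^{\mathsf{sc}}]^+}{\alpha_1 d},$$ where $[x]^+=\max\{x,0\}$.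
   Context: Two-bus network: buses $v_1,v_2$ joined by two parallel lines $e_1,e_2$ with susceptances $B_1,B_2>0$ and thermal limits $\overline f_1,\overline f_2>0$. Bus $i\in\{1,2\}$ has a generator with capacity $\overline q_i\ge 0$ and linear cost $\alpha_i q_i$, and a demand $d_i\ge 0$; throughout $0<\alpha_1\le\alpha_2$ (bus 1 is the cheap bus). An instance is $\boldsymbol\omega=(\overline{\mathbf q},\mathbf d)$ with $\overline{\mathbf q}=(\overline q_1,\overline q_2)$, $\mathbf d=(d_1,d_2)$. Define $f^{\mathsf{ed}}:=(B_1+B_2)\min\{\overline f_1/B_1,\overline f_2/B_2\}$ and $f^{\mathsf{sc}}:=\min\{\overline f_1,\overline f_2\}$ (note $f^{\mathsf{sc}}\le f^{\mathsf{ed}}$). The economic dispatch problem \textsf{ED-2b} is: minimize $\alpha_1q_1+\alpha_2q_2$ over $(q_1,q_2)$ subject to $0\le q_1\le\overline q_1$, $0\le q_2\le\overline q_2$, $q_1+q_2=d_1+d_2$, and $-f^{\mathsf{ed}}\le q_1-d_1\le f^{\mathsf{ed}}$. The security-constrained problem \textsf{SCED-2b} is the same problem with the additional constraint $-f^{\mathsf{sc}}\le q_1-d_1\le f^{\mathsf{sc}}$. Let $c^\star_{\mathsf{ed}}(\boldsymbol\omega)$ and $c^\star_{\mathsf{sc}}(\boldsymbol\omega)$ be the optimal values of \textsf{ED-2b} and \textsf{SCED-2b} for an instance $\boldsymbol\omega$ feasible for both. The price of security of $\boldsymbol\omega$ is $\mathsf{PoS}(\boldsymbol\omega):=c^\star_{\mathsf{sc}}(\boldsymbol\omega)/c^\star_{\mathsf{ed}}(\boldsymbol\omega)$.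 *)

theory Defs
  imports "HOL-Analysis.Analysis"
begin

text \<open>Two-bus network. Parameters: susceptances B1 B2, thermal limits fb1 fb2,
  cost coefficients a1 a2. Capacities qb = (qb1, qb2), demands dd = (d1, d2),
  dispatch q = (q1, q2).\<close>

definition f_ed :: "real \<Rightarrow> real \<Rightarrow> real \<Rightarrow> real \<Rightarrow> real" where
  "f_ed B1 B2 fb1 fb2 = (B1 + B2) * min (fb1 / B1) (fb2 / B2)"

definition f_sc :: "real \<Rightarrow> real \<Rightarrow> real" where
  "f_sc fb1 fb2 = min fb1 fb2"

definition ed_feasible_set ::
  "real \<Rightarrow> real \<times> real \<Rightarrow> real \<times> real \<Rightarrow> (real \<times> real) set" where
  "ed_feasible_set F qb dd =
     {(q1, q2). 0 \<le> q1 \<and> q1 \<le> fst qb \<and> 0 \<le> q2 \<and> q2 \<le> snd qb \<and>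
                q1 + q2 = fst dd + snd dd \<and>
                - F \<le> q1 - fst dd \<and> q1 - fst dd \<le> F}"

definition ED_feas_set where
  "ED_feas_set B1 B2 fb1 fb2 qb dd = ed_feasible_set (f_ed B1 B2 fb1 fb2) qb dd"

definition SCED_feas_set where
  "SCED_feas_set B1 B2 fb1 fb2 qb dd =
     ed_feasible_set (f_ed B1 B2 fb1 fb2) qb dd \<inter> ed_feasible_set (f_sc fb1 fb2) qb dd"

definition cost :: "real \<Rightarrow> real \<Rightarrow> real \<times> real \<Rightarrow> real" where
  "cost a1 a2 q = a1 * fst q + a2 * snd q"

definition c_ed where
  "c_ed B1 B2 fb1 fb2 a1 a2 qb dd = (INF q \<in> ED_feas_set B1 B2 fb1 fb2 qb dd. cost a1 a2 q)"

definition c_sc where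
  "c_sc B1 B2 fb1 fb2 a1 a2 qb dd = (INF q \<in> SCED_feas_set B1 B2 fb1 fb2 qb dd. cost a1 a2 q)"

definition PoS where
  "PoS B1 B2 fb1 fb2 a1 a2 qb dd =
     c_sc B1 B2 fb1 fb2 a1 a2 qb dd / c_ed B1 B2 fb1 fb2 a1 a2 qb dd"

definition Dset where
  "Dset B1 B2 fb1 fb2 qb d =
     {dd. 0 \<le> fst dd \<and> 0 \<le> snd dd \<and> fst dd + snd dd = d \<and>
          ED_feas_set B1 B2 fb1 fb2 qb dd \<noteq> {} \<and> SCED_feas_set B1 B2 fb1 fb2 qb dd \<noteq> {}}"

end

theory Submission
  imports Defs
begin

text \<open>Merit order: the cheap generator 1 serves as much of the load as the flow limit F allows,
  so the optimal cost is a1 d plus the premium (a2 - a1) on the part [d2 - F]^+ of the load at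
  bus 2 that must be served locally. Hence PoS = (a1 d + c [d2 - f_sc]^+) / (a1 d + c [d2 - f_ed]^+)
  with c = a2 - a1. Since [d2 - f_sc]^+ \<le> [d2 - f_ed]^+ + [min d f_ed - f_sc]^+, this ratio is at
  most its value at d2 = min d f_ed, where the denominator premium vanishes.\<close>

lemma f_sc_nonneg: "fb1 > 0 \<Longrightarrow> fb2 > 0 \<Longrightarrow> 0 \<le> f_sc fb1 fb2"
  unfolding f_sc_def by simp

lemma f_sc_le_f_ed:
  assumes "B1 > 0" "B2 > 0" "fb1 > 0" "fb2 > 0"
  shows "f_sc fb1 fb2 \<le> f_ed B1 B2 fb1 fb2"
proof -
  have "fb1 \<le> (B1 + B2) * (fb1 / B1)" "fb2 \<le> (B1 + B2) * (fb2 / B2)"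
    using assms by (simp_all add: field_simps)
  then show ?thesis
    unfolding f_sc_def f_ed_def min_def by (auto intro: order_trans mult_left_mono)
qed

lemma ed_feasible_set_mono: "S \<le> F \<Longrightarrow> ed_feasible_set S qb dd \<subseteq> ed_feasible_set F qb dd"
  unfolding ed_feasible_set_def by auto

lemma ed_feasible_set_optimal_value:
  fixes F a1 a2 :: real
  assumes "a1 \<le> a2" "ed_feasible_set F qb dd \<noteq> {}" "fst dd + snd dd \<le> fst qb"
  shows "(INF q \<in> ed_feasible_set F qb dd. cost a1 a2 q)
     = a1 * (fst dd + snd dd) + (a2 - a1) * max 0 (snd dd - F)"
proof -
  define D where "D = fst dd + snd dd"
  define m where "m = min D (fst dd + F)"
  obtain x1 x2 where "(x1, x2) \<in> ed_feasible_set F qb dd" using assms(2) by auto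
  then have "0 \<le> x1" "0 \<le> x2" "x2 \<le> snd qb" "x1 + x2 = D" "fst dd - F \<le> x1" "x1 \<le> fst dd + F"
    unfolding ed_feasible_set_def D_def by auto
  then have optimal: "(m, D - m) \<in> ed_feasible_set F qb dd"
    using assms(3) unfolding ed_feasible_set_def m_def D_def by auto
  have cheapest: "cost a1 a2 (m, D - m) \<le> cost a1 a2 q" if "q \<in> ed_feasible_set F qb dd" for q
  proof -
    obtain q1 q2 where q: "q = (q1, q2)" by (cases q)
    then have "q1 \<le> m" "q2 = D - q1"
      using that unfolding ed_feasible_set_def m_def D_def by auto
    have "a1 * (m - q1) \<le> a2 * (m - q1)"
      using \<open>q1 \<le> m\<close> assms(1) by (intro mult_right_mono) auto
    then show ?thesis unfolding q \<open>q2 = D - q1\<close> cost_def by (simp add: algebra_simps)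
  qed
  have "cost a1 a2 (m, D - m) = a1 * D + (a2 - a1) * max 0 (snd dd - F)"
    unfolding cost_def m_def D_def by (simp add: min_def max_def algebra_simps)
  moreover have "(INF q \<in> ed_feasible_set F qb dd. cost a1 a2 q) = cost a1 a2 (m, D - m)"
    by (rule cInf_eq_minimum) (use optimal cheapest in auto)
  ultimately show ?thesis unfolding D_def by simp
qed

lemma PoS_eq:
  assumes "B1 > 0" "B2 > 0" "fb1 > 0" "fb2 > 0" "a1 \<le> a2" "d \<le> fst qb"
    and "dd \<in> Dset B1 B2 fb1 fb2 qb d"
  shows "PoS B1 B2 fb1 fb2 a1 a2 qb dd =
      (a1 * d + (a2 - a1) * max 0 (snd dd - f_sc fb1 fb2))
    / (a1 * d + (a2 - a1) * max 0 (snd dd - f_ed B1 B2 fb1 fb2))"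
proof -
  have SCED: "SCED_feas_set B1 B2 fb1 fb2 qb dd = ed_feasible_set (f_sc fb1 fb2) qb dd"
    unfolding SCED_feas_set_def
    using ed_feasible_set_mono[OF f_sc_le_f_ed[OF assms(1-4)]] by blast
  have "fst dd + snd dd = d" "ED_feas_set B1 B2 fb1 fb2 qb dd \<noteq> {}"
    "SCED_feas_set B1 B2 fb1 fb2 qb dd \<noteq> {}"
    using assms(7) unfolding Dset_def by auto
  then show ?thesis
    using ed_feasible_set_optimal_value[OF assms(5)] assms(6)
    unfolding PoS_def c_ed_def c_sc_def SCED ED_feas_set_def by simp
qed

lemma affine_ratio_le:
  fixes A c u u' w :: real
  assumes "A > 0" "c \<ge> 0" "u \<ge> 0" "w \<ge> 0" "u' \<le> w + u"
  shows "(A + c * u') / (A + c * u) \<le> (A + c * w) / A"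
proof -
  have "A * c * u' \<le> A * c * (w + u)" "0 \<le> c * c * w * u"
    using assms by (auto intro: mult_left_mono)
  then have "A * (A + c * u') \<le> (A + c * w) * (A + c * u)"
    by (simp add: algebra_simps)
  moreover have "A + c * u > 0" using assms by (simp add: add_pos_nonneg)
  ultimately show ?thesis using assms(1) by (simp add: divide_simps mult.commute)
qed

theorem lemma3:
  fixes B1 B2 fb1 fb2 a1 a2 d :: real and qb :: "real \<times> real"
  assumes "B1 > 0" "B2 > 0" "fb1 > 0" "fb2 > 0"
    and "0 < a1" "a1 \<le> a2"
    and "fst qb \<ge> 0" "snd qb \<ge> 0"
    and "d > 0" "fst qb \<ge> d"
  defines "dstar \<equiv> (d - min d (f_ed B1 B2 fb1 fb2), min d (f_ed B1 B2 fb1 fb2))"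
  assumes "dstar \<in> Dset B1 B2 fb1 fb2 qb d"
  shows "(\<forall>dd \<in> Dset B1 B2 fb1 fb2 qb d.
            PoS B1 B2 fb1 fb2 a1 a2 qb dd \<le> PoS B1 B2 fb1 fb2 a1 a2 qb dstar)
       \<and> PoS B1 B2 fb1 fb2 a1 a2 qb dstar =
           (a1 * (fst dstar + min (f_sc fb1 fb2) (snd dstar))
             + a2 * max (snd dstar - f_sc fb1 fb2) 0) / (a1 * d)"
proof -
  define F where "F = f_ed B1 B2 fb1 fb2"
  define S where "S = f_sc fb1 fb2"
  have S: "0 \<le> S" "S \<le> F"
    unfolding S_def F_def using assms(1-4) by (simp_all add: f_sc_nonneg f_sc_le_f_ed)
  note PoS = PoS_eq[OF assms(1-4,6,10), folded F_def S_def]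
  have PoS_dstar: "PoS B1 B2 fb1 fb2 a1 a2 qb dstar = (a1 * d + (a2 - a1) * max 0 (min d F - S)) / (a1 * d)"
    using PoS[OF assms(12)] unfolding dstar_def F_def by simp
  have "PoS B1 B2 fb1 fb2 a1 a2 qb dd \<le> PoS B1 B2 fb1 fb2 a1 a2 qb dstar"
    if dd: "dd \<in> Dset B1 B2 fb1 fb2 qb d" for dd
  proof -
    have "snd dd \<le> d" using dd unfolding Dset_def by auto
    then have "max 0 (snd dd - S) \<le> max 0 (min d F - S) + max 0 (snd dd - F)"
      using S by (auto simp: max_def min_def)
    then show ?thesis
      unfolding PoS[OF dd] PoS_dstar using assms(5,6,9)
      by (intro affine_ratio_le) auto
  qed
  moreover have "a1 * d + (a2 - a1) * max 0 (min d F - S) =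
      a1 * (fst dstar + min S (snd dstar)) + a2 * max (snd dstar - S) 0"
    unfolding dstar_def F_def[symmetric] using S
    by (cases "d \<le> F"; cases "d \<le> S") (auto simp: min_def max_def algebra_simps)
  ultimately show ?thesis using PoS_dstar unfolding S_def by simp
qed

end
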